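(* Let $\delta>0$, $\beta\ge1$ and let $k\ge3$ be an integer. For integers $n\ge k+1$ define \[\Delta_k^n=\big(n^\beta-(n-k)^\beta-2\big)^{-\delta}-\big((n+1)^\beta-(n-k)^\beta\big)^{-\delta}.\] Then $n\mapsto\Delta_k^n$ is non-increasing on $\{n\in\mathbb{N}:n\ge k+1\}$. *)

theory Defs
  imports Complex_Main
begin

text \<open>Delta_k^n = (n^beta - (n-k)^beta - 2)^(-delta) - ((n+1)^beta - (n-k)^beta)^(-delta),
  real exponents rendered with powr (all bases are positive for n >= k+1).\<close>
definition Delta :: "real \<Rightarrow> real \<Rightarrow> nat \<Rightarrow> nat \<Rightarrow> real" where
  "Delta \<delta> \<beta> k n =
     (real n powr \<beta> - real (n - k) powr \<beta> - 2) powr (- \<delta>)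
     - ((real n + 1) powr \<beta> - real (n - k) powr \<beta>) powr (- \<delta>)"

end

theory Submission
  imports Defs
begin

text \<open>Write \<open>\<phi>(x) = (x + 1) powr \<beta> - x powr \<beta>\<close> and \<open>a = n - k\<close>. Telescoping gives
  \<open>\<Delta>\<^sub>k\<^sup>n = (W - 2) powr -\<delta> - (W + \<phi>(n)) powr -\<delta>\<close> for the window sum
  \<open>W = \<phi>(a) + \<dots> + \<phi>(a + k - 1)\<close>, and passing from \<open>n\<close> to \<open>n + 1\<close> shifts the
  window by one. By Cauchy's mean value theorem \<open>\<phi>(x + 1) / \<phi>(x) = (1 + 1/\<xi>) powr (\<beta> - 1)\<close>
  for some \<open>\<xi> \<in> (x, x + 1)\<close>, so \<open>\<phi>\<close> is nondecreasing while its successive ratios are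
  nonincreasing. Hence both bases \<open>W - 2 < W + \<phi>(n)\<close> grow under the shift, the larger one
  by the smaller factor, and the difference of their \<open>-\<delta>\<close>-th powers shrinks.\<close>

definition fdiff_powr :: "real \<Rightarrow> real \<Rightarrow> real" where
  "fdiff_powr b x = (x + 1) powr b - x powr b"

lemma fdiff_powr_cauchy_mvt:
  assumes A: "0 < A"
  obtains e where "A < e" "e < A + 1"
    "fdiff_powr b (A + 1) * e powr (b - 1) = fdiff_powr b A * (e + 1) powr (b - 1)"
proof (cases "b = 0")
  case True
  then show ?thesis using that[of "A + 1/2"] A by (simp add: fdiff_powr_def)
next
  case False
  have shifted: "((\<lambda>t. (t + 1) powr b) has_real_derivative b * (t + 1) powr (b - 1)) (at t)"
    if "t > 0" for t
    using DERIV_fun_powr[of "\<lambda>t. t + 1" 1 t b] that by (auto intro!: derivative_eq_intros)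
  have plain: "((\<lambda>t. t powr b) has_real_derivative b * t powr (b - 1)) (at t)" if "t > 0" for t
    using has_real_derivative_powr that by blast
  have "\<exists>e. A < e \<and> e < A + 1 \<and>
      ((A + 1 + 1) powr b - (A + 1) powr b) * (b * e powr (b - 1))
      = ((A + 1) powr b - A powr b) * (b * (e + 1) powr (b - 1))"
    apply (rule GMVT'[where f = "\<lambda>t. (t + 1) powr b" and g = "\<lambda>t. t powr b", simplified])
        apply simp
    subgoal for z using A shifted[of z] DERIV_isCont by force
    subgoal for z using A plain[of z] DERIV_isCont by force
    subgoal for z using A plain[of z] by force
    subgoal for z using A shifted[of z] by force
    done
  then show ?thesis
    using that False unfolding fdiff_powr_def by (auto simp: add.assoc)
qed

lemma fdiff_powr_nonneg: "0 \<le> x \<Longrightarrow> 0 \<le> b \<Longrightarrow> 0 \<le> fdiff_powr b x"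
  unfolding fdiff_powr_def using powr_mono2[of b x "x + 1"] by simp

lemma fdiff_powr_ge_1:
  assumes x: "0 \<le> x" and b: "1 \<le> b"
  shows "1 \<le> fdiff_powr b x"
proof -
  have "(x + 1) powr b = (x + 1) * (x + 1) powr (b - 1)"
    using powr_add[of "x + 1" 1 "b - 1"] x by simp
  moreover have "x powr b \<le> x * (x + 1) powr (b - 1)"
  proof -
    have "x powr b = x * x powr (b - 1)"
      using powr_add[of x 1 "b - 1"] x by (cases "x = 0") auto
    also have "\<dots> \<le> x * (x + 1) powr (b - 1)"
      using powr_mono2[of "b - 1" x "x + 1"] x b by (intro mult_left_mono) auto
    finally show ?thesis .
  qed
  moreover have "1 \<le> (x + 1) powr (b - 1)"
    using ge_one_powr_ge_zero[of "x + 1" "b - 1"] x b by simp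
  ultimately show ?thesis unfolding fdiff_powr_def by (simp add: algebra_simps)
qed

lemma fdiff_powr_le_succ:
  assumes A: "0 < A" and b: "1 \<le> b"
  shows "fdiff_powr b A \<le> fdiff_powr b (A + 1)"
proof -
  obtain e where e: "A < e" "e < A + 1"
    and ratio: "fdiff_powr b (A + 1) * e powr (b - 1) = fdiff_powr b A * (e + 1) powr (b - 1)"
    using fdiff_powr_cauchy_mvt[OF A] by blast
  have "fdiff_powr b A * e powr (b - 1) \<le> fdiff_powr b A * (e + 1) powr (b - 1)"
    using powr_mono2[of "b - 1" e "e + 1"] fdiff_powr_nonneg[of A b] e A b
    by (intro mult_left_mono) auto
  then have "fdiff_powr b A * e powr (b - 1) \<le> fdiff_powr b (A + 1) * e powr (b - 1)"
    using ratio by simp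
  then show ?thesis
    using e A by (simp add: mult_le_cancel_right)
qed

lemma fdiff_powr_ratio_antimono:
  assumes A: "0 < A" and AB: "A + 1 \<le> B" and b: "1 \<le> b"
  shows "fdiff_powr b (B + 1) * fdiff_powr b A \<le> fdiff_powr b B * fdiff_powr b (A + 1)"
proof -
  have B: "0 < B" using A AB by simp
  obtain e where e: "A < e" "e < A + 1"
    and ratio_A: "fdiff_powr b (A + 1) * e powr (b - 1) = fdiff_powr b A * (e + 1) powr (b - 1)"
    using fdiff_powr_cauchy_mvt[OF A] by blast
  obtain c where c: "B < c" "c < B + 1"
    and ratio_B: "fdiff_powr b (B + 1) * c powr (b - 1) = fdiff_powr b B * (c + 1) powr (b - 1)"
    using fdiff_powr_cauchy_mvt[OF B] by blast
  have "((c + 1) * e) powr (b - 1) \<le> (c * (e + 1)) powr (b - 1)"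
    using powr_mono2[of "b - 1" "(c + 1) * e" "c * (e + 1)"] e c AB A b
    by (simp add: algebra_simps)
  then have factors: "(c + 1) powr (b - 1) * e powr (b - 1) \<le> c powr (b - 1) * (e + 1) powr (b - 1)"
    by (simp add: powr_mult)
  have nonneg: "0 \<le> fdiff_powr b B * fdiff_powr b A"
    using fdiff_powr_nonneg[of A b] fdiff_powr_nonneg[of B b] A B b by simp
  have "(fdiff_powr b (B + 1) * fdiff_powr b A) * (c powr (b - 1) * e powr (b - 1))
      = (fdiff_powr b B * fdiff_powr b A) * ((c + 1) powr (b - 1) * e powr (b - 1))"
    using ratio_B by (simp add: algebra_simps)
  also have "\<dots> \<le> (fdiff_powr b B * fdiff_powr b A) * (c powr (b - 1) * (e + 1) powr (b - 1))"
    using factors nonneg by (intro mult_left_mono)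
  also have "\<dots> = (fdiff_powr b B * fdiff_powr b (A + 1)) * (c powr (b - 1) * e powr (b - 1))"
    using ratio_A by (simp add: algebra_simps)
  finally show ?thesis
    using e c A B by (simp add: mult_le_cancel_right)
qed

lemma powr_neg_diff_le_of_ratio_le:
  fixes d x y x' y' :: real
  assumes d: "0 < d" and x: "0 < x" and xy: "x \<le> y" and xx': "x \<le> x'" and yy': "y \<le> y'"
    and ratio: "y' * x \<le> x' * y"
  shows "y powr (-d) - y' powr (-d) \<le> x powr (-d) - x' powr (-d)"
proof -
  define l where "l = y / x"
  have l: "1 \<le> l" "y = l * x" "y' \<le> l * x'"
    using x xy ratio unfolding l_def by (simp_all add: field_simps)
  have "l powr (-d) * x' powr (-d) \<le> y' powr (-d)"
    using powr_mono2'[of "-d" y' "l * x'"] d x xy yy' l(3) by (simp add: powr_mult)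
  moreover have "l powr (-d) * (x powr (-d) - x' powr (-d)) \<le> x powr (-d) - x' powr (-d)"
    using powr_mono2'[of "-d" x x'] powr_mono2'[of "-d" 1 l] d x xx' l(1)
    by (intro mult_left_le_one_le) auto
  ultimately show ?thesis
    using l(2) by (simp add: powr_mult algebra_simps)
qed

lemma Delta_eq_window:
  assumes "k \<le> n"
  shows "Delta d b k n =
    ((\<Sum>i<k. fdiff_powr b (real (n - k) + real i)) - 2) powr (-d)
    - ((\<Sum>i<k. fdiff_powr b (real (n - k) + real i)) + fdiff_powr b (real n)) powr (-d)"
proof -
  have "(\<Sum>i<k. fdiff_powr b (real (n - k) + real i)) = real n powr b - real (n - k) powr b"
    unfolding fdiff_powr_def
    using sum_lessThan_telescope[of "\<lambda>i. (real (n - k) + real i) powr b" k] assms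
    by (simp add: add_ac)
  then show ?thesis
    unfolding Delta_def fdiff_powr_def by (simp add: add_ac)
qed

lemma Delta_Suc_le:
  assumes d: "0 < d" and b: "1 \<le> b" and k: "3 \<le> k" and n: "k + 1 \<le> n"
  shows "Delta d b k (Suc n) \<le> Delta d b k n"
proof -
  define a where "a = real (n - k)"
  define P where "P = (\<Sum>i<k. fdiff_powr b (a + real i))"
  define Q where "Q = (\<Sum>i<k. fdiff_powr b (a + 1 + real i))"
  define v where "v = fdiff_powr b (a + real k)"
  define v' where "v' = fdiff_powr b (a + real k + 1)"
  have a: "1 \<le> a" using n unfolding a_def by simp
  have "real k \<le> P"
    using sum_mono[of "{..<k}" "\<lambda>_. 1" "\<lambda>i. fdiff_powr b (a + real i)"]
      fdiff_powr_ge_1 a b unfolding P_def by simp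
  then have P2: "0 < P - 2" using k by simp
  have PQ: "P \<le> Q"
    unfolding P_def Q_def
    by (rule sum_mono) (use fdiff_powr_le_succ[of "a + real _" b] a b in \<open>simp add: add_ac\<close>)
  have vv': "v \<le> v'"
    unfolding v_def v'_def using fdiff_powr_le_succ a b by simp
  have v: "0 \<le> v"
    unfolding v_def using fdiff_powr_nonneg a b by simp
  have "v' * P \<le> v * Q"
    unfolding P_def Q_def sum_distrib_left v_def v'_def
    by (rule sum_mono) (use fdiff_powr_ratio_antimono[of "a + real _" "a + real k" b] a b
        in \<open>simp add: add_ac\<close>)
  then have "(Q + v') * (P - 2) \<le> (Q - 2) * (P + v)"
    using PQ vv' by (simp add: algebra_simps)
  then have "(P + v) powr (-d) - (Q + v') powr (-d) \<le> (P - 2) powr (-d) - (Q - 2) powr (-d)"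
    using powr_neg_diff_le_of_ratio_le[OF d P2] v PQ vv' by simp
  moreover have "Delta d b k n = (P - 2) powr (-d) - (P + v) powr (-d)"
    using Delta_eq_window[of k n] n unfolding P_def v_def a_def by simp
  moreover have "Delta d b k (Suc n) = (Q - 2) powr (-d) - (Q + v') powr (-d)"
    using Delta_eq_window[of k "Suc n"] n
    unfolding Q_def v'_def a_def by (simp add: Suc_diff_le add_ac)
  ultimately show ?thesis by simp
qed

theorem lemma3:
  fixes \<delta> \<beta> :: real and k :: nat
  assumes "\<delta> > 0" and "\<beta> \<ge> 1" and "k \<ge> 3"
  shows "\<forall>n m. k + 1 \<le> n \<longrightarrow> n \<le> m \<longrightarrow> Delta \<delta> \<beta> k m \<le> Delta \<delta> \<beta> k n"
proof (intro allI impI)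
  fix n m :: nat
  assume n: "k + 1 \<le> n" and "n \<le> m"
  from \<open>n \<le> m\<close> show "Delta \<delta> \<beta> k m \<le> Delta \<delta> \<beta> k n"
  proof (induction m rule: dec_induct)
    case base
    show ?case by simp
  next
    case (step m)
    then show ?case
      using Delta_Suc_le[of \<delta> \<beta> k m] assms n by simp
  qed
qed

end
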